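(* Let $s$ be a positive integer, let $f:\mathbb{N}\to\mathbb{C}$ be an arithmetical function, and let $f'(k)=\sum_{d\mid k}\mu(d)f(k/d)$. Suppose $$\sum_{k=1}^{\infty}2^{\omega(k)}\frac{|f'(k)|}{k^s}<\infty .$$ For each $q\ge 1$ put $a_q=\sum_{m=1}^{\infty}\frac{f'(mq)}{(mq)^s}$. Then for every positive integer $n$ the series $\sum_{q=1}^{\infty}a_q\,c_q^{(s)}(n^s)$ converges absolutely (indeed $\sum_{q\ge1}\sum_{m\ge1}\frac{|f'(mq)|}{(mq)^s}|c_q^{(s)}(n^s)|<\infty$), and its sum equals $f(n)$.
   Context: For positive integers $a,b,s$, the generalized gcd $(a,b)_s$ is the largest $d^s$ ($d\in\mathbb{N}$) such that $d^s\mid a$ and $d^s\mid b$. The Cohen–Ramanujan sum is defined for positive integers $q,n,s$ by $$c_q^{(s)}(n)=\sum_{\substack{h=1\\ (h,q^s)_s=1}}^{q^s} e^{2\pi i n h/q^s}.$$ $\mu$ is the Möbius function and $\omega(k)$ is the number of distinct prime divisors of $k$. *)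

theory Defs
  imports "HOL-Analysis.Analysis" "HOL-Computational_Algebra.Squarefree"
begin

definition mu :: "nat \<Rightarrow> int" where
  "mu d = (if d = 0 then 0 else if squarefree d then (-1) ^ card (prime_factors d) else 0)"

definition omega :: "nat \<Rightarrow> nat" where
  "omega k = card (prime_factors k)"

definition gen_gcd :: "nat \<Rightarrow> nat \<Rightarrow> nat \<Rightarrow> nat" where
  "gen_gcd s a b = (GREATEST x. \<exists>d. x = d ^ s \<and> d ^ s dvd a \<and> d ^ s dvd b)"

definition cohen_ramanujan :: "nat \<Rightarrow> nat \<Rightarrow> nat \<Rightarrow> complex" where
  "cohen_ramanujan s q n =
     (\<Sum>h\<in>{h\<in>{1..q ^ s}. gen_gcd s h (q ^ s) = 1}.
        exp (2 * of_real pi * \<i> * of_nat n * of_nat h / of_nat (q ^ s)))"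

definition mu_conv :: "(nat \<Rightarrow> complex) \<Rightarrow> nat \<Rightarrow> complex" where
  "mu_conv f k = (\<Sum>d | d dvd k. of_int (mu d) * f (k div d))"

end

theory Submission
  imports Defs
begin

text \<open>
  Writing the condition \<open>(h, q^s)_s = 1\<close> as a sum of \<open>mu d\<close> over the \<open>d | q\<close> with
  \<open>d^s | h\<close> and summing the resulting geometric series of roots of unity gives
  \<open>c_q(n^s) = \<Sum>_{d | q} mu(d) (q/d)^s [q/d | n]\<close>. By Moebius inversion
  \<open>\<Sum>_{q | k} c_q(n^s) = k^s [k | n]\<close>, and the same formula bounds
  \<open>\<Sum>_{q | k} |c_q(n^s)|\<close> by \<open>\<sigma>_s(n) 2^\<omega>(k)\<close>. Regrouping the double series over
  \<open>(q, m)\<close> along \<open>k = mq\<close>, the bound turns the hypothesis into absolute convergence, and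
  the sum becomes \<open>\<Sum>_{k | n} f'(k) = f(n)\<close>.
\<close>

lemma mu_prime_mult_coprime:
  assumes p: "prime p" and np: "\<not> p dvd e" and e: "e > 0"
  shows "mu (p * e) = - mu e"
proof -
  have cop: "coprime p e" using p np by (simp add: prime_imp_coprime)
  have sq: "squarefree (p * e) \<longleftrightarrow> squarefree e"
    using cop squarefree_mult_coprime squarefree_prime[OF p] squarefree_mono[of e "p*e"] by auto
  have pf: "prime_factors (p * e) = insert p (prime_factors e)"
    using p e by (simp add: prime_factors_product prime_prime_factors)
  have "p \<notin> prime_factors e" using np by (auto simp: in_prime_factors_iff)
  then have "card (prime_factors (p*e)) = Suc (card (prime_factors e))"
    by (simp add: pf)
  then show ?thesis using p e sq by (auto simp: mu_def prime_gt_0_nat)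
qed

lemma mu_prime_mult_dvd:
  assumes p: "prime p" and dp: "p dvd e"
  shows "mu (p * e) = 0"
proof -
  have "p^2 dvd p * e" using dp by (auto simp: power2_eq_square)
  then have "\<not> squarefree (p*e)" using p by (meson not_prime_unit not_squarefreeI)
  then show ?thesis by (simp add: mu_def)
qed

lemma sum_mu_divisors_prime_dvd:
  fixes p m :: nat
  assumes p: "prime p" and m: "m > 0"
  shows "(\<Sum>d | d dvd p * m \<and> p dvd d. mu d) = - (\<Sum>d | d dvd p * m \<and> \<not> p dvd d. mu d)"
proof -
  have multiples: "{d. d dvd p * m \<and> p dvd d} = (\<lambda>e. p * e) ` {e. e dvd m}"
    using p by (auto simp: prime_gt_0_nat elim!: dvdE)
  have non_multiples: "{d. d dvd p * m \<and> \<not> p dvd d} = {e. e dvd m \<and> \<not> p dvd e}"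
    using p by (auto simp: coprime_dvd_mult_right_iff prime_imp_coprime coprime_commute[of _ p])
  have inj: "inj_on (\<lambda>e. p * e) {e. e dvd m}" using p by (auto simp: inj_on_def prime_gt_0_nat)
  have "(\<Sum>d | d dvd p * m \<and> p dvd d. mu d) = (\<Sum>e | e dvd m. mu (p * e))"
    unfolding multiples by (subst sum.reindex[OF inj]) simp
  also have "\<dots> = (\<Sum>e | e dvd m. if \<not> p dvd e then - mu e else 0)"
    using m p by (intro sum.cong refl) (auto simp: mu_prime_mult_coprime mu_prime_mult_dvd intro: Nat.gr0I)
  also have "\<dots> = (\<Sum>e | e dvd m \<and> \<not> p dvd e. - mu e)"
    using m by (subst sum.inter_filter[symmetric]) (simp_all add: conj_commute)
  finally show ?thesis by (simp add: non_multiples sum_negf)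
qed

lemma sum_mu_divisors:
  fixes n :: nat
  assumes n: "n > 0"
  shows "(\<Sum>d | d dvd n. mu d) = (if n = 1 then 1 else 0)"
proof (cases "n = 1")
  case True
  then show ?thesis by (simp add: mu_def)
next
  case False
  then obtain p where p: "prime p" "p dvd n" using prime_factor_nat by blast
  then obtain m where nm: "n = p * m" by (elim dvdE)
  have "finite {d. d dvd n}" using n by simp
  then have "(\<Sum>d | d dvd n. mu d)
      = (\<Sum>d | d dvd n \<and> p dvd d. mu d) + (\<Sum>d | d dvd n \<and> \<not> p dvd d. mu d)"
    by (subst sum.union_disjoint[symmetric]) (auto intro: sum.cong)
  also have "\<dots> = 0"
    using sum_mu_divisors_prime_dvd[OF p(1), of m] n nm by simp
  finally show ?thesis using False by simp
qed

lemma bij_betw_divisor_chains: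
  fixes k :: nat
  assumes k: "k > 0"
  shows "bij_betw (\<lambda>(e, d). (e * d, d))
           (SIGMA e:{e. e dvd k}. {d. d dvd k div e}) (SIGMA q:{q. q dvd k}. {d. d dvd q})"
proof -
  have nonzero: "e \<noteq> 0" "d \<noteq> 0" if "e dvd k" "d dvd k div e" for e d
  proof -
    show "e \<noteq> 0" using that k by auto
    then have "k div e \<noteq> 0" using that k by (simp add: dvd_div_eq_0_iff)
    then show "d \<noteq> 0" using that by auto
  qed
  have product: "e * d dvd k" if "e dvd k" "d dvd k div e" for e d
    using that nonzero[OF that] dvd_div_iff_mult[of e k d] by (simp add: mult.commute)
  have quotient: "q div d dvd k" "d dvd k div (q div d)" if "q dvd k" "d dvd q" for q d
  proof -
    have "q \<noteq> 0" using that k by auto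
    moreover from this have "d \<noteq> 0" using that by auto
    ultimately have q: "q div d * d = q" "q div d \<noteq> 0" using that by (auto simp: dvd_div_eq_0_iff)
    then show "q div d dvd k"
      using that(1) by (metis dvd_triv_left dvd_trans)
    then show "d dvd k div (q div d)"
      using q that(1) dvd_div_iff_mult[of "q div d" k d] by (simp add: mult.commute)
  qed
  show ?thesis
    by (rule bij_betwI[where g = "\<lambda>(q, d). (q div d, d)"]) (auto simp: product quotient nonzero)
qed

lemma sum_dvd_sum_dvd_swap:
  fixes g h :: "nat \<Rightarrow> 'a :: comm_semiring_1"
  assumes k: "k > 0"
  shows "(\<Sum>q | q dvd k. \<Sum>d | d dvd q. g d * h (q div d))
       = (\<Sum>e | e dvd k. h e * (\<Sum>d | d dvd (k div e). g d))"
proof -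
  have fin: "finite {d. d dvd q}" if "q dvd k" for q :: nat
    using that k by (auto intro: Nat.gr0I)
  have "(\<Sum>q | q dvd k. \<Sum>d | d dvd q. g d * h (q div d))
      = (\<Sum>(q, d) \<in> (SIGMA q:{q. q dvd k}. {d. d dvd q}). g d * h (q div d))"
    using k fin by (subst sum.Sigma) auto
  also have "\<dots> = (\<Sum>(e, d) \<in> (SIGMA e:{e. e dvd k}. {d. d dvd k div e}). g d * h (e * d div d))"
    by (subst sum.reindex_bij_betw[OF bij_betw_divisor_chains[OF k], symmetric]) (simp add: case_prod_unfold)
  also have "\<dots> = (\<Sum>e | e dvd k. \<Sum>d | d dvd k div e. h e * g d)"
    using k fin by (subst sum.Sigma) (auto intro!: sum.cong simp: dvd_div_eq_0_iff mult.commute)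
  finally show ?thesis
    by (simp add: sum_distrib_left)
qed

lemma moebius_inversion:
  fixes h :: "nat \<Rightarrow> 'a :: comm_ring_1"
  assumes k: "k > 0"
  shows "(\<Sum>q | q dvd k. \<Sum>d | d dvd q. of_int (mu d) * h (q div d)) = h k"
proof -
  have "(\<Sum>q | q dvd k. \<Sum>d | d dvd q. of_int (mu d) * h (q div d))
      = (\<Sum>e | e dvd k. h e * (\<Sum>d | d dvd (k div e). of_int (mu d)))"
    by (rule sum_dvd_sum_dvd_swap[OF k])
  also have "\<dots> = (\<Sum>e | e dvd k. if e = k then h e else 0)"
  proof (intro sum.cong refl)
    fix e assume e: "e \<in> {e. e dvd k}"
    have kd: "k div e > 0" using e k by (auto simp: dvd_div_eq_0_iff)
    have "(\<Sum>d | d dvd (k div e). (of_int (mu d) :: 'a)) = of_int (\<Sum>d | d dvd (k div e). mu d)"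
      by simp
    also have "\<dots> = (if k div e = 1 then 1 else 0)" using sum_mu_divisors[OF kd] by simp
    moreover have "k div e = 1 \<longleftrightarrow> e = k"
    proof -
      obtain t where t: "k = e * t" using e by (auto simp: dvd_def)
      have "e > 0" "t > 0" using t k by auto
      then show ?thesis using t by auto
    qed
    ultimately show "h e * (\<Sum>d | d dvd (k div e). of_int (mu d)) = (if e = k then h e else 0)"
      by auto
  qed
  also have "\<dots> = h k" using k by (simp add: sum.delta)
  finally show ?thesis .
qed

lemma squarefree_eq_if_prime_factors_eq:
  fixes a b :: nat
  assumes "a > 0" "b > 0" "squarefree a" "squarefree b" "prime_factors a = prime_factors b"
  shows "a = b"
proof (rule multiplicity_eq_nat)
  fix p :: nat assume p: "prime p"
  have "multiplicity p x = (if p \<in> prime_factors x then 1 else 0)" if "x > 0" "squarefree x" for x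
  proof -
    have "multiplicity p x \<le> 1" using that p squarefree_factorial_semiring''[of x] by auto
    moreover have "p \<in> prime_factors x \<longleftrightarrow> multiplicity p x > 0"
      using p by (simp add: prime_factors_multiplicity)
    ultimately show ?thesis by auto
  qed
  then show "multiplicity p a = multiplicity p b" using assms by simp
qed (use assms in auto)

lemma sum_abs_mu_divisors_le:
  fixes n :: nat
  assumes n: "n > 0"
  shows "(\<Sum>d | d dvd n. \<bar>mu d\<bar>) \<le> 2 ^ omega n"
proof -
  have fin: "finite {d. d dvd n}" using n by simp
  have "(\<Sum>d | d dvd n. \<bar>mu d\<bar>) = (\<Sum>d \<in> {d. d dvd n}. if squarefree d then 1 else 0)"
    using n by (intro sum.cong refl) (auto simp: mu_def abs_mult)
  also have "\<dots> = of_nat (card {d \<in> {d. d dvd n}. squarefree d})"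
    using fin by (simp add: sum.If_cases Int_def)
  also have "card {d \<in> {d. d dvd n}. squarefree d} \<le> card (Pow (prime_factors n))"
  proof (rule card_inj_on_le[where f = prime_factors])
    show "inj_on prime_factors {d \<in> {d. d dvd n}. squarefree d}"
      unfolding inj_on_def using n by (auto intro!: squarefree_eq_if_prime_factors_eq intro: Nat.gr0I)
    show "prime_factors ` {d \<in> {d. d dvd n}. squarefree d} \<subseteq> Pow (prime_factors n)"
      using n by (auto simp: in_prime_factors_iff intro: dvd_trans)
  qed simp
  also have "card (Pow (prime_factors n)) = 2 ^ omega n" by (simp add: card_Pow omega_def)
  finally show ?thesis by simp
qed

lemma omega_dvd_mono:
  fixes m k :: nat
  assumes "m dvd k" "k > 0"
  shows "omega m \<le> omega k"
  unfolding omega_def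
  by (rule card_mono) (use assms in \<open>auto simp: in_prime_factors_iff intro: dvd_trans\<close>)

lemma lcm_power_nat:
  fixes a b :: nat
  assumes "a > 0" "b > 0"
  shows "lcm a b ^ s = lcm (a ^ s) (b ^ s)"
proof -
  have g: "gcd a b > 0" using assms by simp
  have "gcd a b ^ s * lcm a b ^ s = (a * b) ^ s"
    by (subst prod_gcd_lcm_nat[of a b]) (rule power_mult_distrib[symmetric])
  also have "\<dots> = a^s * b^s" by (rule power_mult_distrib)
  also have "\<dots> = gcd (a^s) (b^s) * lcm (a^s) (b^s)"
    by (rule prod_gcd_lcm_nat)
  also have "gcd (a^s) (b^s) = gcd a b ^ s" by simp
  finally show ?thesis using g assms by auto
qed

lemma gen_gcd_eq_1_iff:
  assumes s: "s > 0" and h: "h > 0" and q: "q > 0"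
  shows "gen_gcd s h (q^s) = 1 \<longleftrightarrow> (\<forall>d. d dvd q \<and> d^s dvd h \<longrightarrow> d = 1)"
proof -
  define P where "P = (\<lambda>x. \<exists>d. x = d ^ s \<and> d ^ s dvd h \<and> d ^ s dvd q ^ s)"
  have G: "gen_gcd s h (q^s) = Greatest P" by (simp add: gen_gcd_def P_def)
  have P1: "P 1" by (auto simp: P_def intro!: exI[of _ 1])
  have bound: "\<And>y. P y \<Longrightarrow> y \<le> h" using h by (auto simp: P_def dest: dvd_imp_le)
  show ?thesis
  proof
    assume g1: "gen_gcd s h (q^s) = 1"
    show "\<forall>d. d dvd q \<and> d^s dvd h \<longrightarrow> d = 1"
    proof (intro allI impI)
      fix d assume d: "d dvd q \<and> d^s dvd h"
      then have "P (d^s)" by (auto simp: P_def intro!: exI[of _ d] dvd_power_same)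
      then have "d^s \<le> 1" using Greatest_le_nat[of P "d^s" h] bound g1 G by auto
      moreover have "d > 0" using d q by (auto intro: Nat.gr0I)
      moreover have "d \<le> d^s" using \<open>d > 0\<close> s by (simp add: self_le_power)
      ultimately show "d = 1" by linarith
    qed
  next
    assume A: "\<forall>d. d dvd q \<and> d^s dvd h \<longrightarrow> d = 1"
    have "P (Greatest P)" using GreatestI_nat[of P 1 h] P1 bound by auto
    then obtain d where "Greatest P = d^s" "d^s dvd h" "d^s dvd q^s" by (auto simp: P_def)
    moreover then have "d dvd q" using s by simp
    ultimately show "gen_gcd s h (q^s) = 1" using A G by auto
  qed
qed

text \<open>The set is closed under \<open>lcm\<close>, so it consists of the divisors of its maximum.\<close>

lemma divisors_with_power_dvd_eq_divisors:
  fixes q h s :: nat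
  assumes s: "s > 0" and h: "h > 0" and q: "q > 0"
  shows "\<exists>L>0. {d. d dvd q \<and> d^s dvd h} = {d. d dvd L}"
proof -
  define D where "D = {d. d dvd q \<and> d^s dvd h}"
  have fin: "finite D" using q by (auto simp: D_def)
  have one: "1 \<in> D" by (simp add: D_def)
  define L where "L = Max D"
  have LD: "L \<in> D" using fin one unfolding L_def by (intro Max_in) auto
  have L0: "L > 0" using LD q by (auto simp: D_def intro: Nat.gr0I)
  have "D = {d. d dvd L}"
  proof
    show "D \<subseteq> {d. d dvd L}"
    proof
      fix d assume d: "d \<in> D"
      have d0: "d > 0" using d q by (auto simp: D_def intro: Nat.gr0I)
      have "lcm d L \<in> D"
      proof -
        have "lcm d L dvd q" using d LD by (auto simp: D_def)
        moreover have "lcm d L ^ s dvd h"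
          using d LD d0 L0 by (auto simp: D_def lcm_power_nat)
        ultimately show ?thesis by (simp add: D_def)
      qed
      then have "lcm d L \<le> L" using fin by (simp add: L_def)
      moreover have "L \<le> lcm d L" using d0 L0 by (simp add: dvd_imp_le lcm_pos_nat)
      ultimately have "lcm d L = L" by simp
      then show "d \<in> {d. d dvd L}" by (metis dvd_lcm1 mem_Collect_eq)
    qed
    show "{d. d dvd L} \<subseteq> D"
      using LD by (auto simp: D_def intro: dvd_trans dvd_power_same)
  qed
  then show ?thesis using L0 by (auto simp: D_def)
qed

lemma gen_gcd_eq_1_indicator:
  assumes s: "s > 0" and h: "h > 0" and q: "q > 0"
  shows "(if gen_gcd s h (q^s) = 1 then 1 else 0 :: complex)
       = (\<Sum>d | d dvd q \<and> d^s dvd h. of_int (mu d))"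
proof -
  obtain L where L: "L > 0" "{d. d dvd q \<and> d^s dvd h} = {d. d dvd L}"
    using divisors_with_power_dvd_eq_divisors[OF s h q] by blast
  have "(\<Sum>d | d dvd q \<and> d^s dvd h. (of_int (mu d) :: complex)) = of_int (\<Sum>d | d dvd L. mu d)"
    by (simp add: L(2))
  also have "\<dots> = (if L = 1 then 1 else 0)" by (simp add: sum_mu_divisors[OF L(1)])
  also have "L = 1 \<longleftrightarrow> gen_gcd s h (q^s) = 1"
  proof -
    have "gen_gcd s h (q^s) = 1 \<longleftrightarrow> (\<forall>d. d dvd L \<longrightarrow> d = 1)"
      using gen_gcd_eq_1_iff[OF s h q] L(2) unfolding set_eq_iff mem_Collect_eq by blast
    also have "\<dots> \<longleftrightarrow> L = 1" by auto
    finally show ?thesis by simp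
  qed
  finally show ?thesis by simp
qed

lemma sum_roots_of_unity_powers:
  fixes M N :: nat
  assumes M: "M > 0"
  shows "(\<Sum>j\<in>{1..M}. exp (2 * of_real pi * \<i> * of_nat N * of_nat j / of_nat M))
       = (if M dvd N then of_nat M else 0)"
proof -
  define z where "z = exp (2 * of_real pi * \<i> * of_nat N / of_nat M)"
  have trm: "exp (2 * of_real pi * \<i> * of_nat N * of_nat j / of_nat M) = z ^ j" for j :: nat
  proof -
    have "2 * of_real pi * \<i> * of_nat N * of_nat j / of_nat M
        = of_nat j * (2 * of_real pi * \<i> * of_nat N / of_nat M)" by simp
    then show ?thesis unfolding z_def exp_of_nat_mult[symmetric] by metis
  qed
  have z1: "z = 1 \<longleftrightarrow> M dvd N" using complex_root_unity_eq_1[of M N] M by (simp add: z_def)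
  have zM: "z ^ M = 1" using complex_root_unity[of M N] M by (simp add: z_def)
  have "(\<Sum>j\<in>{1..M}. exp (2 * of_real pi * \<i> * of_nat N * of_nat j / of_nat M)) = (\<Sum>j\<in>{1..M}. z ^ j)"
    by (simp add: trm)
  also have "\<dots> = (\<Sum>j<M. z ^ Suc j)"
    using sum.atLeast1_atMost_eq[of "\<lambda>j. z ^ j" M] by simp
  also have "\<dots> = z * (\<Sum>j<M. z ^ j)" by (simp add: sum_distrib_left)
  also have "\<dots> = (if M dvd N then of_nat M else 0)"
  proof (cases "M dvd N")
    case True
    then show ?thesis using z1 by simp
  next
    case False
    then have "z \<noteq> 1" using z1 by simp
    then have "(\<Sum>j<M. z ^ j) = (z ^ M - 1) / (z - 1)" by (rule geometric_sum)
    then show ?thesis using False zM by simp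
  qed
  finally show ?thesis .
qed

lemma sum_exp_multiples:
  fixes s q d N :: nat
  assumes s: "s > 0" and q: "q > 0" and d: "d dvd q"
  shows "(\<Sum>h\<in>{h \<in> {1..q^s}. d^s dvd h}. exp (2 * of_real pi * \<i> * of_nat N * of_nat h / of_nat (q ^ s)))
       = (if (q div d)^s dvd N then of_nat ((q div d)^s) else 0)"
proof -
  define M where "M = (q div d)^s"
  define c where "c = d^s"
  have d0: "d > 0" using d q by (auto intro: Nat.gr0I)
  have c0: "c > 0" using d0 by (simp add: c_def)
  have M0: "M > 0" using d q d0 by (auto simp: M_def dest: dvd_imp_le intro: Nat.gr0I simp: div_greater_zero_iff)
  have qs: "q^s = c * M" using d by (simp add: c_def M_def power_mult_distrib[symmetric])
  have img: "{h \<in> {1..q^s}. d^s dvd h} = (\<lambda>j. c * j) ` {1..M}"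
  proof
    show "{h \<in> {1..q^s}. d^s dvd h} \<subseteq> (\<lambda>j. c * j) ` {1..M}"
    proof
      fix h assume h: "h \<in> {h \<in> {1..q^s}. d^s dvd h}"
      then obtain j where j: "h = c * j" by (auto simp: c_def dvd_def)
      have "j \<ge> 1" using h j by (auto intro: Nat.gr0I)
      moreover have "j \<le> M" using h j qs c0 by auto
      ultimately show "h \<in> (\<lambda>j. c * j) ` {1..M}" using j by auto
    qed
    show "(\<lambda>j. c * j) ` {1..M} \<subseteq> {h \<in> {1..q^s}. d^s dvd h}"
      using qs c0 by (auto simp: c_def)
  qed
  have inj: "inj_on (\<lambda>j. c * j) {1..M}" using c0 by (auto simp: inj_on_def)
  have "(\<Sum>h\<in>{h \<in> {1..q^s}. d^s dvd h}. exp (2 * of_real pi * \<i> * of_nat N * of_nat h / of_nat (q ^ s)))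
      = (\<Sum>j\<in>{1..M}. exp (2 * of_real pi * \<i> * of_nat N * of_nat (c * j) / of_nat (c * M)))"
    unfolding img by (subst sum.reindex[OF inj]) (simp add: qs)
  also have "\<dots> = (\<Sum>j\<in>{1..M}. exp (2 * of_real pi * \<i> * of_nat N * of_nat j / of_nat M))"
  proof (intro sum.cong refl)
    fix j
    have "(2 * of_real pi * \<i> * of_nat N * of_nat (c * j) / of_nat (c * M) :: complex)
        = 2 * of_real pi * \<i> * of_nat N * of_nat j / of_nat M"
      using c0 by (simp add: field_simps)
    then show "exp (2 * of_real pi * \<i> * of_nat N * of_nat (c * j) / of_nat (c * M))
        = exp (2 * of_real pi * \<i> * of_nat N * of_nat j / of_nat M)" by simp
  qed
  also have "\<dots> = (if M dvd N then of_nat M else 0)" by (rule sum_roots_of_unity_powers[OF M0])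
  finally show ?thesis by (simp add: M_def)
qed

lemma cohen_ramanujan_eq_sum_mu:
  fixes s q N :: nat
  assumes s: "s > 0" and q: "q > 0"
  shows "cohen_ramanujan s q N =
    (\<Sum>d | d dvd q. of_int (mu d) * (if (q div d)^s dvd N then of_nat ((q div d)^s) else 0))"
proof -
  define e where "e = (\<lambda>h::nat. exp (2 * of_real pi * \<i> * of_nat N * of_nat h / of_nat (q ^ s)) :: complex)"
  define Dq where "Dq = {d. d dvd q}"
  have finD: "finite Dq" using q by (simp add: Dq_def)
  have "cohen_ramanujan s q N = (\<Sum>h\<in>{h\<in>{1..q ^ s}. gen_gcd s h (q ^ s) = 1}. e h)"
    by (simp add: cohen_ramanujan_def e_def)
  also have "\<dots> = (\<Sum>h\<in>{1..q^s}. if gen_gcd s h (q ^ s) = 1 then e h else 0)"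
    by (rule sum.inter_filter) simp
  also have "\<dots> = (\<Sum>h\<in>{1..q^s}. (if gen_gcd s h (q ^ s) = 1 then 1 else 0) * e h)"
    by (intro sum.cong) auto
  also have "\<dots> = (\<Sum>h\<in>{1..q^s}. (\<Sum>d \<in> {d. d \<in> Dq \<and> d^s dvd h}. of_int (mu d)) * e h)"
    by (intro sum.cong refl, subst gen_gcd_eq_1_indicator[OF s _ q]) (auto simp: Dq_def)
  also have "\<dots> = (\<Sum>h\<in>{1..q^s}. \<Sum>d \<in> {d. d \<in> Dq \<and> d^s dvd h}. of_int (mu d) * e h)"
    by (simp add: sum_distrib_right)
  also have "\<dots> = (\<Sum>d\<in>Dq. \<Sum>h \<in> {h. h \<in> {1..q^s} \<and> d^s dvd h}. of_int (mu d) * e h)"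
    by (rule sum.swap_restrict) (use finD in auto)
  also have "\<dots> = (\<Sum>d\<in>Dq. of_int (mu d) * (\<Sum>h \<in> {h \<in> {1..q^s}. d^s dvd h}. e h))"
    by (simp add: sum_distrib_left)
  also have "\<dots> = (\<Sum>d\<in>Dq. of_int (mu d) * (if (q div d)^s dvd N then of_nat ((q div d)^s) else 0))"
    by (intro sum.cong refl, unfold e_def, subst sum_exp_multiples[OF s q]) (auto simp: Dq_def)
  finally show ?thesis by (simp add: Dq_def)
qed

lemma cohen_ramanujan_power_eq_sum_mu:
  fixes s q n :: nat
  assumes s: "s > 0" and q: "q > 0"
  shows "cohen_ramanujan s q (n^s) =
    (\<Sum>d | d dvd q. of_int (mu d) * (if (q div d) dvd n then of_nat ((q div d)^s) else 0))"
  using cohen_ramanujan_eq_sum_mu[OF s q, of "n^s"] s by simp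

lemma sum_cohen_ramanujan_divisors:
  fixes s k n :: nat
  assumes s: "s > 0" and k: "k > 0"
  shows "(\<Sum>q | q dvd k. cohen_ramanujan s q (n^s)) = (if k dvd n then of_nat (k^s) else 0)"
proof -
  have "(\<Sum>q | q dvd k. cohen_ramanujan s q (n^s))
      = (\<Sum>q | q dvd k. \<Sum>d | d dvd q. of_int (mu d) * (if (q div d) dvd n then of_nat ((q div d)^s) else (0::complex)))"
    using k by (intro sum.cong refl cohen_ramanujan_power_eq_sum_mu[OF s]) (auto intro: Nat.gr0I)
  also have "\<dots> = (if k dvd n then of_nat (k^s) else 0)"
    by (rule moebius_inversion[OF k, where h = "\<lambda>e. if e dvd n then of_nat (e^s) else (0::complex)"])
  finally show ?thesis .
qed

lemma norm_cohen_ramanujan_power_le: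
  fixes s q n :: nat
  assumes s: "s > 0" and q: "q > 0"
  shows "norm (cohen_ramanujan s q (n^s))
    \<le> (\<Sum>d | d dvd q. of_int \<bar>mu d\<bar> * (if q div d dvd n then real ((q div d)^s) else 0))"
proof -
  have "norm (cohen_ramanujan s q (n^s))
     \<le> (\<Sum>d | d dvd q. norm (of_int (mu d) * (if (q div d) dvd n then of_nat ((q div d)^s) else (0::complex))))"
    unfolding cohen_ramanujan_power_eq_sum_mu[OF s q] by (rule norm_sum)
  also have "\<dots> = (\<Sum>d | d dvd q. of_int \<bar>mu d\<bar> * (if q div d dvd n then real ((q div d)^s) else 0))"
    by (intro sum.cong refl) (auto simp: norm_mult norm_power)
  finally show ?thesis .
qed

lemma sum_norm_cohen_ramanujan_divisors_le:
  fixes s k n :: nat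
  assumes s: "s > 0" and k: "k > 0" and n: "n > 0"
  shows "(\<Sum>q | q dvd k. norm (cohen_ramanujan s q (n^s))) \<le> (\<Sum>e | e dvd n. real (e^s)) * 2 ^ omega k"
proof -
  define H where "H = (\<lambda>e. if e dvd n then real (e^s) else 0)"
  have "(\<Sum>q | q dvd k. norm (cohen_ramanujan s q (n^s)))
      \<le> (\<Sum>q | q dvd k. \<Sum>d | d dvd q. of_int \<bar>mu d\<bar> * H (q div d))"
    unfolding H_def using k
    by (intro sum_mono norm_cohen_ramanujan_power_le[OF s]) (auto intro: Nat.gr0I)
  also have "\<dots> = (\<Sum>e | e dvd k. H e * (\<Sum>d | d dvd (k div e). of_int \<bar>mu d\<bar>))"
    by (rule sum_dvd_sum_dvd_swap[OF k])
  also have "\<dots> \<le> (\<Sum>e | e dvd k. H e * 2 ^ omega k)"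
  proof (rule sum_mono)
    fix e assume e: "e \<in> {e. e dvd k}"
    have ke: "k div e > 0" "k div e dvd k" using e k by (auto simp: dvd_div_eq_0_iff)
    have "(\<Sum>d | d dvd (k div e). real_of_int \<bar>mu d\<bar>) = of_int (\<Sum>d | d dvd (k div e). \<bar>mu d\<bar>)"
      by simp
    also have "\<dots> \<le> of_int (2 ^ omega (k div e))"
      using sum_abs_mu_divisors_le[OF ke(1)] by linarith
    also have "\<dots> \<le> 2 ^ omega k"
      using omega_dvd_mono[OF ke(2) k] by simp
    finally show "H e * (\<Sum>d | d dvd (k div e). real_of_int \<bar>mu d\<bar>) \<le> H e * 2 ^ omega k"
      by (intro mult_left_mono) (auto simp: H_def)
  qed
  also have "\<dots> = (\<Sum>e | e dvd k. H e) * 2 ^ omega k"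
    by (simp add: sum_distrib_right)
  also have "(\<Sum>e | e dvd k. H e) = (\<Sum>e | e dvd k \<and> e dvd n. real (e^s))"
    unfolding H_def using k by (subst sum.inter_filter[symmetric]) simp_all
  also have "\<dots> \<le> (\<Sum>e | e dvd n. real (e^s))"
    using n by (intro sum_mono2) auto
  finally show ?thesis by (simp add: mult_right_mono)
qed

lemma atLeast_1_eq_range_Suc: "{1::nat..} = range Suc"
  using atLeast_Suc_greaterThan[of 0] by (simp add: greaterThan_0)

lemma abs_summable_on_atLeast_1_imp_sums:
  fixes u :: "nat \<Rightarrow> 'a :: banach"
  assumes "(\<lambda>m. norm (u m)) summable_on {1..}"
  shows "summable (\<lambda>m. norm (u (Suc m)))" "(\<lambda>m. u (Suc m)) sums infsum u {1..}"
proof -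
  have "(\<lambda>m. norm (u m)) summable_on range Suc"
    using assms unfolding atLeast_1_eq_range_Suc .
  then have "(\<lambda>m. norm (u (Suc m))) summable_on UNIV"
    by (simp add: summable_on_reindex o_def)
  then show norm_summable: "summable (\<lambda>m. norm (u (Suc m)))"
    by (rule summable_on_imp_summable)
  have summable: "summable (\<lambda>m. u (Suc m))"
    using norm_summable by (rule summable_norm_cancel)
  have "((\<lambda>m. u (Suc m)) has_sum (\<Sum>m. u (Suc m))) UNIV"
    using norm_summable summable_sums[OF summable] by (rule norm_summable_imp_has_sum)
  then have "(u has_sum (\<Sum>m. u (Suc m))) (range Suc)"
    by (simp add: has_sum_reindex o_def)
  then have "(u has_sum (\<Sum>m. u (Suc m))) {1..}"
    unfolding atLeast_1_eq_range_Suc .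
  then show "(\<lambda>m. u (Suc m)) sums infsum u {1..}"
    by (simp add: infsumI summable_sums[OF summable])
qed

lemma summable_on_atLeast_1_if_summable_Suc:
  fixes v :: "nat \<Rightarrow> real"
  assumes "summable (\<lambda>k. v (Suc k))" "\<And>k. v k \<ge> 0"
  shows "v summable_on {1..}"
proof -
  have "(\<lambda>k. v (Suc k)) summable_on UNIV"
    using assms by (intro summable_nonneg_imp_summable_on) auto
  then have "v summable_on range Suc"
    by (simp add: summable_on_reindex o_def)
  then show ?thesis unfolding atLeast_1_eq_range_Suc .
qed

lemma abs_summable_on_atLeast_1_pairs_imp_iterated_sums:
  fixes g :: "nat \<times> nat \<Rightarrow> 'a :: banach"
  assumes g: "(\<lambda>x. norm (g x)) summable_on {1..} \<times> {1..}"
  shows "summable (\<lambda>m. g (Suc q, Suc m))"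
    and "summable (\<lambda>q. norm (\<Sum>m. g (Suc q, Suc m)))"
    and "(\<lambda>q. \<Sum>m. g (Suc q, Suc m)) sums infsum g ({1..} \<times> {1..})"
proof -
  define row where "row q = infsum (\<lambda>m. g (q, m)) {1..}" for q
  note rows = Infinite_Sum.abs_summable_on_Sigma_iff[THEN iffD1, OF g]
  have row_abs: "(\<lambda>m. norm (g (q, m))) summable_on {1..}" if "q \<in> {1..}" for q
    using rows that by blast
  note row_sums = abs_summable_on_atLeast_1_imp_sums[OF row_abs]
  show "summable (\<lambda>m. g (Suc q, Suc m))"
    using row_sums(1)[of "Suc q"] by (simp add: summable_norm_cancel)
  have row_eq: "(\<Sum>m. g (Suc q, Suc m)) = row (Suc q)" for q
    using row_sums(2)[of "Suc q"] by (simp add: row_def sums_iff)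
  have "(\<lambda>q. norm (row q)) summable_on {1..}"
  proof (rule summable_on_comparison_test)
    show "(\<lambda>q. norm (infsum (\<lambda>m. norm (g (q, m))) {1..})) summable_on {1..}"
      using rows by blast
    show "norm (row q) \<le> norm (infsum (\<lambda>m. norm (g (q, m))) {1..})" if "q \<in> {1..}" for q
      using norm_infsum_bound[OF row_abs[OF that]] by (simp add: row_def)
  qed simp
  moreover have "infsum row {1..} = infsum g ({1..} \<times> {1..})"
    unfolding row_def using abs_summable_summable[OF g] by (rule infsum_Sigma_banach)
  ultimately show "summable (\<lambda>q. norm (\<Sum>m. g (Suc q, Suc m)))"
    and "(\<lambda>q. \<Sum>m. g (Suc q, Suc m)) sums infsum g ({1..} \<times> {1..})"
    using abs_summable_on_atLeast_1_imp_sums[of row] by (simp_all add: row_eq)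
qed

lemma bij_betw_mult_pairs_divisor_pairs:
  "bij_betw (\<lambda>(q, m). (m * q, q)) ({1..} \<times> {1..}) (SIGMA k:{1::nat..}. {q. q dvd k})"
proof (rule bij_betwI[where g = "\<lambda>(k, q). (q, k div q)"])
  show "(\<lambda>(k, q). (q, k div q)) \<in> (SIGMA k:{1::nat..}. {q. q dvd k}) \<rightarrow> {1..} \<times> {1..}"
    by (auto simp: Suc_le_eq dvd_div_eq_0_iff intro: Nat.gr0I)
qed auto

lemma summable_on_divisor_pairs_norm_cohen_ramanujan:
  fixes b :: "nat \<Rightarrow> real" and s n :: nat
  assumes s: "s > 0" and n: "n > 0"
    and b: "(\<lambda>k. 2 ^ omega k * b k) summable_on {1..}" and b_nonneg: "\<And>k. b k \<ge> 0"
  shows "(\<lambda>(k, q). b k * norm (cohen_ramanujan s q (n ^ s))) summable_on (SIGMA k:{1..}. {q. q dvd k})"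
proof -
  define row where "row k = b k * (\<Sum>q | q dvd k. norm (cohen_ramanujan s q (n ^ s)))" for k
  define C where "C = (\<Sum>e | e dvd n. real (e^s))"
  have row_has_sum: "((\<lambda>q. b k * norm (cohen_ramanujan s q (n ^ s))) has_sum row k) {q. q dvd k}"
    if "k \<in> {1..}" for k
    using that by (simp add: row_def sum_distrib_left)
  have "row summable_on {1..}"
  proof (rule summable_on_comparison_test)
    show "(\<lambda>k. C * (2 ^ omega k * b k)) summable_on {1..}"
      using b by (rule summable_on_cmult_right)
    show "row k \<le> C * (2 ^ omega k * b k)" if "k \<in> {1..}" for k
      using mult_left_mono[OF sum_norm_cohen_ramanujan_divisors_le[OF s _ n, of k] b_nonneg[of k]] that
      by (simp add: row_def C_def algebra_simps)
    show "0 \<le> row k" for k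
      by (simp add: row_def b_nonneg sum_nonneg)
  qed
  then show ?thesis
  proof (rule summable_on_SigmaI[where g = row, rotated])
    show "((\<lambda>q. (\<lambda>(k, q). b k * norm (cohen_ramanujan s q (n ^ s))) (k, q)) has_sum row k) {q. q dvd k}"
      if "k \<in> {1..}" for k
      using row_has_sum[OF that] by simp
  qed (simp add: b_nonneg)
qed

lemma has_sum_divisor_pairs_cohen_ramanujan:
  fixes F :: "nat \<Rightarrow> complex" and s n :: nat
  assumes s: "s > 0" and n: "n > 0"
    and summable: "(\<lambda>(k, q). F k * cohen_ramanujan s q (n ^ s)) summable_on (SIGMA k:{1..}. {q. q dvd k})"
  shows "((\<lambda>(k, q). F k * cohen_ramanujan s q (n ^ s)) has_sum (\<Sum>k | k dvd n. F k * of_nat k ^ s))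
           (SIGMA k:{1..}. {q. q dvd k})"
proof -
  have "(\<Sum>\<^sub>\<infinity>(k, q)\<in>(SIGMA k:{1..}. {q. q dvd k}). F k * cohen_ramanujan s q (n ^ s))
      = (\<Sum>\<^sub>\<infinity>k\<in>{1..}. \<Sum>\<^sub>\<infinity>q\<in>{q. q dvd k}. F k * cohen_ramanujan s q (n ^ s))"
    using infsum_Sigma_banach[OF summable] by simp
  also have "\<dots> = (\<Sum>\<^sub>\<infinity>k\<in>{1..}. if k dvd n then F k * of_nat k ^ s else 0)"
  proof (rule infsum_cong)
    fix k :: nat assume "k \<in> {1..}"
    then have k: "k > 0" by simp
    then have "(\<Sum>\<^sub>\<infinity>q\<in>{q. q dvd k}. F k * cohen_ramanujan s q (n ^ s))
        = F k * (\<Sum>q | q dvd k. cohen_ramanujan s q (n ^ s))"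
      by (simp add: sum_distrib_left)
    then show "(\<Sum>\<^sub>\<infinity>q\<in>{q. q dvd k}. F k * cohen_ramanujan s q (n ^ s))
        = (if k dvd n then F k * of_nat k ^ s else 0)"
      by (simp add: sum_cohen_ramanujan_divisors[OF s k])
  qed
  also have "\<dots> = (\<Sum>k | k dvd n. F k * of_nat k ^ s)"
    using n by (subst infsum_cong_neutral[where T = "{k. k dvd n}"]) (auto intro: Nat.gr0I)
  finally show ?thesis
    using has_sum_infsum[OF summable] by (simp only:)
qed

lemma cohen_ramanujan_pairs_series:
  fixes F :: "nat \<Rightarrow> complex" and s n :: nat
  assumes s: "s > 0" and n: "n > 0"
    and weights: "(\<lambda>k. 2 ^ omega k * norm (F k)) summable_on {1..}"
  shows "(\<lambda>(q, m). norm (F (m * q) * cohen_ramanujan s q (n ^ s))) summable_on {1..} \<times> {1..}"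
    and "((\<lambda>(q, m). F (m * q) * cohen_ramanujan s q (n ^ s)) has_sum (\<Sum>k | k dvd n. F k * of_nat k ^ s))
           ({1..} \<times> {1..})"
proof -
  define P where "P = (\<lambda>(k, q). F k * cohen_ramanujan s q (n ^ s))"
  note pairs = bij_betw_mult_pairs_divisor_pairs
  have "(\<lambda>(k, q). norm (F k) * norm (cohen_ramanujan s q (n ^ s)))
      summable_on (SIGMA k:{1..}. {q. q dvd k})"
    using weights by (rule summable_on_divisor_pairs_norm_cohen_ramanujan[OF s n]) simp
  then have P_abs: "(\<lambda>x. norm (P x)) summable_on (SIGMA k:{1..}. {q. q dvd k})"
    by (simp add: P_def norm_mult case_prod_unfold)
  then show "(\<lambda>(q, m). norm (F (m * q) * cohen_ramanujan s q (n ^ s))) summable_on {1..} \<times> {1..}"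
    using summable_on_reindex_bij_betw[OF pairs, of "\<lambda>x. norm (P x)"] by (simp add: P_def case_prod_unfold)
  have "(P has_sum (\<Sum>k | k dvd n. F k * of_nat k ^ s)) (SIGMA k:{1..}. {q. q dvd k})"
    using abs_summable_summable[OF P_abs] unfolding P_def
    by (rule has_sum_divisor_pairs_cohen_ramanujan[OF s n])
  then show "((\<lambda>(q, m). F (m * q) * cohen_ramanujan s q (n ^ s)) has_sum (\<Sum>k | k dvd n. F k * of_nat k ^ s))
           ({1..} \<times> {1..})"
    using has_sum_reindex_bij_betw[OF pairs, of P] by (simp add: P_def case_prod_unfold)
qed

lemma suminf_mult2_of_summable:
  fixes u :: "nat \<Rightarrow> 'a :: real_normed_field"
  assumes "summable (\<lambda>m. u m * c)"
  shows "(\<Sum>m. u m) * c = (\<Sum>m. u m * c)"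
proof (cases "c = 0")
  case False
  then have "summable u"
    using assms by (simp add: mult.commute[of _ c] summable_mult_D)
  then show ?thesis by (rule suminf_mult2)
qed simp

theorem theorem2:
  fixes s :: nat and f :: "nat \<Rightarrow> complex"
  assumes s_pos: "s > 0"
    and conv: "summable (\<lambda>k. 2 ^ omega (Suc k) * norm (mu_conv f (Suc k)) / real (Suc k) ^ s)"
  defines "a \<equiv> (\<lambda>q. \<Sum>m. mu_conv f (Suc m * q) / of_nat (Suc m * q) ^ s)"
  shows "\<forall>n>0.
      (\<lambda>(q, m). norm (mu_conv f (m * q)) / real (m * q) ^ s
                 * norm (cohen_ramanujan s q (n ^ s))) summable_on ({1..} \<times> {1..})
    \<and> summable (\<lambda>q. norm (a (Suc q) * cohen_ramanujan s (Suc q) (n ^ s)))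
    \<and> (\<lambda>q. a (Suc q) * cohen_ramanujan s (Suc q) (n ^ s)) sums f n"
proof (intro allI impI)
  fix n :: nat assume n: "n > 0"
  define F where "F k = mu_conv f k / of_nat k ^ s" for k
  define G where "G = (\<lambda>(q, m). F (m * q) * cohen_ramanujan s q (n ^ s))"
  have "(\<lambda>k. 2 ^ omega k * norm (F k)) summable_on {1..}"
    using conv by (intro summable_on_atLeast_1_if_summable_Suc)
      (simp_all add: F_def norm_divide norm_power del: of_nat_Suc)
  note series = cohen_ramanujan_pairs_series[OF s_pos n this, folded G_def]
  have G_abs: "(\<lambda>x. norm (G x)) summable_on {1..} \<times> {1..}"
    using series(1) by (simp add: G_def case_prod_unfold)
  note iterated = abs_summable_on_atLeast_1_pairs_imp_iterated_sums[OF G_abs]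
  have "(\<Sum>k | k dvd n. F k * of_nat k ^ s) = f n"
    using n moebius_inversion[OF n, of f] by (simp add: F_def mu_conv_def dvd_pos_nat)
  then have G_sum: "infsum G ({1..} \<times> {1..}) = f n"
    using series(2) by (simp add: infsumI)
  have rows: "a (Suc q) * cohen_ramanujan s (Suc q) (n ^ s) = (\<Sum>m. G (Suc q, Suc m))" for q
    using suminf_mult2_of_summable[OF iterated(1)[of q, unfolded G_def prod.case]]
    unfolding a_def F_def G_def prod.case .
  show "(\<lambda>(q, m). norm (mu_conv f (m * q)) / real (m * q) ^ s
                 * norm (cohen_ramanujan s q (n ^ s))) summable_on ({1..} \<times> {1..})
    \<and> summable (\<lambda>q. norm (a (Suc q) * cohen_ramanujan s (Suc q) (n ^ s)))
    \<and> (\<lambda>q. a (Suc q) * cohen_ramanujan s (Suc q) (n ^ s)) sums f n"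
    using series(1) iterated(2,3)
    by (simp only: rows G_sum) (simp add: F_def case_prod_unfold norm_mult norm_divide norm_power)
qed

end
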